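(* Let $f\ge 2$, $q=p^f$, and let $r=r_0+r_1p+\cdots+r_{f-1}p^{f-1}$ with integers $r_j\ge q$ for all $0\le j\le f-1$ and $r$ divisible by $q-1$. Let $W=\bigotimes_{j=0}^{f-1}V_{r_j}^{\mathrm{Fr}^j}$ and $\overline W = W/\langle\theta_0,\dots,\theta_{f-1}\rangle$. Define linear maps $\iota_0:\bigotimes_{j=0}^{f-1}V_0^{\mathrm{Fr}^j}\to \overline W$ by \[ 1\mapsto \prod_{j}X_j^{r_j}-\prod_j X_j^{r_j-(p-1)}Y_j^{p-1}+\prod_j Y_j^{r_j}, \] and $\iota_{p-1}:\bigotimes_{j=0}^{f-1}V_{p-1}^{\mathrm{Fr}^j}\to\overline W$ on monomials by \[ \prod_j X_j^{p-1-i_j}Y_j^{i_j}\mapsto \prod_j X_j^{r_j-i_j}Y_j^{i_j}\quad\text{if }(i_0,\dots,i_{f-1})\ne(p-1,\dots,p-1),\qquad \prod_j Y_j^{p-1}\mapsto \prod_jY_j^{r_j} \] (with $0\le i_j\le p-1$). Then $\iota_0$ and $\iota_{p-1}$ are $\mathrm{GL}_2(\mathbb{F}_q)$-equivariant and together induce an isomorphism of $\mathrm{GL}_2(\mathbb{F}_q)$-representations \[ \iota_0\oplus\iota_{p-1}:\ \bigotimes_{j=0}^{f-1}V_0^{\mathrm{Fr}^j}\ \oplus\ \bigotimes_{j=0}^{f-1}V_{p-1}^{\mathrm{Fr}^j}\ \xrightarrow{\ \sim\ }\ \overline W . \]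
   Context: $p$ is a prime, $\mathbb{F}_q$ the field with $q=p^f$ elements, and all representations are over $\overline{\mathbb{F}}_p$ (with a fixed embedding $\mathbb{F}_q\hookrightarrow\overline{\mathbb{F}}_p$). For an integer $n\ge0$ and $0\le j\le f-1$, $V_n^{\mathrm{Fr}^j}$ denotes the space of homogeneous polynomials of degree $n$ in variables $X_j,Y_j$, on which $g=\begin{pmatrix}a&b\\c&d\end{pmatrix}\in\mathrm{GL}_2(\mathbb{F}_q)$ acts by $(g\cdot P)(X_j,Y_j)=P(a^{p^j}X_j+c^{p^j}Y_j,\ b^{p^j}X_j+d^{p^j}Y_j)$; tensor products carry the diagonal action, so $\bigotimes_j V_{n_j}^{\mathrm{Fr}^j}$ is identified with polynomials in $X_0,Y_0,\dots,X_{f-1},Y_{f-1}$ homogeneous of degree $n_j$ in $(X_j,Y_j)$ for each $j$. In particular $\bigotimes_j V_0^{\mathrm{Fr}^j}$ is the trivial representation. For $j\in\mathbb{Z}/f\mathbb{Z}$, $\theta_j=X_jY_{j-1}^p-Y_jX_{j-1}^p$, and $\langle\theta_0,\dots,\theta_{f-1}\rangle$ denotes the subrepresentation of $W$ consisting of elements of $W$ lying in the ideal generated by $\theta_0,\dots,\theta_{f-1}$ in the polynomial ring. *)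

theory Defs
  imports Main "HOL-Library.Poly_Mapping" "HOL-Computational_Algebra.Polynomial"
begin

text \<open>Polynomials over a field 'k in the variables X_j = (j,False), Y_j = (j,True):
  finitely supported maps from monomials (exponent vectors) to coefficients,
  with convolution multiplication (library instance of poly_mapping).\<close>
type_synonym 'k mpoly = "((nat \<times> bool) \<Rightarrow>\<^sub>0 nat) \<Rightarrow>\<^sub>0 'k"

definition const :: "'k::comm_ring_1 \<Rightarrow> 'k mpoly" where
  "const c = Poly_Mapping.single 0 c"

definition var :: "nat \<times> bool \<Rightarrow> 'k::comm_ring_1 mpoly" where
  "var v = Poly_Mapping.single (Poly_Mapping.single v 1) 1"

definition Xv :: "nat \<Rightarrow> 'k::comm_ring_1 mpoly" where "Xv j = var (j, False)"
definition Yv :: "nat \<Rightarrow> 'k::comm_ring_1 mpoly" where "Yv j = var (j, True)"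

definition subst :: "(nat \<times> bool \<Rightarrow> 'k::comm_ring_1 mpoly) \<Rightarrow> 'k mpoly \<Rightarrow> 'k mpoly" where
  "subst \<sigma> P = (\<Sum>m\<in>Poly_Mapping.keys P. const (Poly_Mapping.lookup P m) * (\<Prod>v\<in>Poly_Mapping.keys m. \<sigma> v ^ Poly_Mapping.lookup m v))"

text \<open>Action of g = (a b; c d) on the tensor product (j ranges over 0..f-1):
  X_j \<mapsto> a^(p^j) X_j + c^(p^j) Y_j,  Y_j \<mapsto> b^(p^j) X_j + d^(p^j) Y_j.\<close>
definition act :: "nat \<Rightarrow> nat \<Rightarrow> 'k::comm_ring_1 \<Rightarrow> 'k \<Rightarrow> 'k \<Rightarrow> 'k \<Rightarrow> 'k mpoly \<Rightarrow> 'k mpoly" where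
  "act p f a b c d P = subst (\<lambda>(j, isY).
     if j < f then
       (if \<not> isY then const (a ^ (p ^ j)) * Xv j + const (c ^ (p ^ j)) * Yv j
        else const (b ^ (p ^ j)) * Xv j + const (d ^ (p ^ j)) * Yv j)
     else var (j, isY)) P"

definition Fq :: "nat \<Rightarrow> 'k::field set" where
  "Fq q = {x. x ^ q = x}"

definition GL2 :: "nat \<Rightarrow> ('k::field \<times> 'k \<times> 'k \<times> 'k) set" where
  "GL2 q = {(a, b, c, d). a \<in> Fq q \<and> b \<in> Fq q \<and> c \<in> Fq q \<and> d \<in> Fq q \<and> a * d - b * c \<noteq> 0}"

text \<open>The space \<Otimes>_j V_{n_j}^{Fr^j}: polynomials homogeneous of degree n j in (X_j,Y_j)
  for each j < f and involving no other variables.\<close>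
definition tens :: "nat \<Rightarrow> (nat \<Rightarrow> nat) \<Rightarrow> 'k::comm_ring_1 mpoly set" where
  "tens f n = {P. \<forall>m\<in>Poly_Mapping.keys P. (\<forall>j<f. Poly_Mapping.lookup m (j, False) + Poly_Mapping.lookup m (j, True) = n j)
                              \<and> (\<forall>j b. f \<le> j \<longrightarrow> Poly_Mapping.lookup m (j, b) = 0)}"

definition theta :: "nat \<Rightarrow> nat \<Rightarrow> nat \<Rightarrow> 'k::comm_ring_1 mpoly" where
  "theta p f j = Xv j * Yv ((j + f - 1) mod f) ^ p - Yv j * Xv ((j + f - 1) mod f) ^ p"

definition in_theta_ideal :: "nat \<Rightarrow> nat \<Rightarrow> 'k::comm_ring_1 mpoly \<Rightarrow> bool" where
  "in_theta_ideal p f P \<longleftrightarrow> (\<exists>c :: nat \<Rightarrow> 'k mpoly. P = (\<Sum>j<f. c j * theta p f j))"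

definition lin_ext :: "(((nat \<times> bool) \<Rightarrow>\<^sub>0 nat) \<Rightarrow> 'k::comm_ring_1 mpoly) \<Rightarrow> 'k mpoly \<Rightarrow> 'k mpoly" where
  "lin_ext img Q = (\<Sum>m\<in>Poly_Mapping.keys Q. const (Poly_Mapping.lookup Q m) * img m)"

text \<open>iota_0 (lifted to W): 1 \<mapsto> prod X^r - prod X^(r-(p-1)) Y^(p-1) + prod Y^r.\<close>
definition iota0 :: "nat \<Rightarrow> nat \<Rightarrow> (nat \<Rightarrow> nat) \<Rightarrow> 'k::comm_ring_1 mpoly \<Rightarrow> 'k mpoly" where
  "iota0 p f r = lin_ext (\<lambda>m.
      (\<Prod>j<f. Xv j ^ r j) - (\<Prod>j<f. Xv j ^ (r j - (p - 1)) * Yv j ^ (p - 1)) + (\<Prod>j<f. Yv j ^ r j))"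

text \<open>iota_{p-1} (lifted to W), on monomials prod X_j^(p-1-i_j) Y_j^(i_j).\<close>
definition iota1 :: "nat \<Rightarrow> nat \<Rightarrow> (nat \<Rightarrow> nat) \<Rightarrow> 'k::comm_ring_1 mpoly \<Rightarrow> 'k mpoly" where
  "iota1 p f r = lin_ext (\<lambda>m.
      if (\<forall>j<f. Poly_Mapping.lookup m (j, True) = p - 1) then (\<Prod>j<f. Yv j ^ r j)
      else (\<Prod>j<f. Xv j ^ (r j - Poly_Mapping.lookup m (j, True)) * Yv j ^ Poly_Mapping.lookup m (j, True)))"

end

(* Evaluate at the points with X_j = x^(p^j), Y_j = y^(p^j) for x, y in F_q.  These
   evaluations kill every theta_j, turn the action of g = (a b; c d) into the substitution
   (x, y) |-> (a x + c y, b x + d y), and, at nonzero points, are preserved by iota_0 and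
   iota_{p-1}, because q - 1 divides the p-adic exponent sums sum_j r_j p^j and
   sum_j (r_j - (p - 1)) p^j.

   Modulo the theta_j every monomial of W lies in the image of iota_0 + iota_{p-1}:
   trading X_j Y_{j-1}^p for Y_j X_{j-1}^p lowers the total Y-degree, until either all
   Y-exponents are below p or all of them equal r_j.  An element of that image which
   vanishes at all nonzero points of F_q^2 is zero: at (1, t) it is a polynomial in t with
   distinct exponents below q, and the point (0, 1) separates its constant term.  Hence an
   element of W lies in the theta-ideal iff it vanishes at all nonzero F_q-points, which
   gives injectivity, surjectivity and equivariance at once. *)

theory Submission
  imports Defs "HOL-Computational_Algebra.Primes"
begin

abbreviation lookup where "lookup \<equiv> Poly_Mapping.lookup"

abbreviation keys where "keys \<equiv> Poly_Mapping.keys"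

abbreviation single where "single \<equiv> Poly_Mapping.single"

section \<open>The field with \<open>q\<close> elements inside \<open>k\<close>\<close>

lemma rsquarefree_dvd:
  assumes "rsquarefree P" "R dvd P"
  shows "rsquarefree R"
proof -
  obtain S where P: "P = R * S" using assms(2) by (auto elim: dvdE)
  have "R \<noteq> 0" "S \<noteq> 0" using assms(1) P by (auto simp: rsquarefree_def)
  then have "order a R \<le> order a P" for a by (simp add: P order_mult)
  then show ?thesis using assms(1) \<open>R \<noteq> 0\<close> unfolding rsquarefree_def
    by (metis le_Suc_eq le_zero_eq One_nat_def)
qed

lemma rsquarefree_if_no_common_root_pderiv:
  fixes P :: "'k::field poly"
  assumes "P \<noteq> 0" "\<forall>a. poly P a = 0 \<longrightarrow> poly (pderiv P) a \<noteq> 0"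
  shows "rsquarefree P"
proof -
  have "order a P \<le> 1" for a
  proof (rule ccontr)
    assume "\<not> order a P \<le> 1"
    then have "[:-a, 1:] ^ 2 dvd P" by (simp add: order_divides)
    then obtain S where "P = [:-a, 1:] * ([:-a, 1:] * S)"
      by (metis dvdE power2_eq_square mult.assoc)
    moreover have root: "poly [:-a, 1:] a = 0" by simp
    ultimately have "poly P a = 0" "poly (pderiv P) a = 0"
      by (simp_all only: pderiv_mult poly_add poly_mult root mult_zero_left mult_zero_right add_0)
    with assms(2) show False by blast
  qed
  then show ?thesis using assms(1) by (auto simp: rsquarefree_def le_Suc_eq)
qed

lemma degree_le_card_roots_if_rsquarefree:
  fixes P :: "'k::field poly"
  assumes root_exists: "\<forall>P :: 'k poly. 0 < degree P \<longrightarrow> (\<exists>x. poly P x = 0)"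
    and "rsquarefree P"
  shows "degree P \<le> card {x. poly P x = 0}"
  using assms(2)
proof (induction "degree P" arbitrary: P rule: less_induct)
  case less
  show ?case
  proof (cases "degree P = 0")
    case False
    then obtain a where "poly P a = 0" using root_exists by blast
    then obtain R where P: "P = [:-a, 1:] * R" by (auto simp: poly_eq_0_iff_dvd elim: dvdE)
    have "P \<noteq> 0" "R \<noteq> 0" using less.prems P by (auto simp: rsquarefree_def)
    have R: "rsquarefree R" by (rule rsquarefree_dvd[OF less.prems]) (unfold P, rule dvd_triv_right)
    have "order a P = 1" using less.prems \<open>poly P a = 0\<close> \<open>P \<noteq> 0\<close> by (rule rsquarefree_root_order)
    moreover have "order a P = order a [:-a, 1:] + order a R"
      using \<open>P \<noteq> 0\<close> unfolding P by (rule order_mult)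
    ultimately have "order a R = 0" using order_power_n_n[of a 1] by simp
    then have "a \<notin> {x. poly R x = 0}" using \<open>R \<noteq> 0\<close> by (simp add: order_root)
    moreover have "{x. poly P x = 0} = insert a {x. poly R x = 0}" using P by auto
    moreover have "degree P = Suc (degree R)" unfolding P using \<open>R \<noteq> 0\<close> by (subst degree_mult_eq) auto
    ultimately show ?thesis
      using less.hyps[OF _ R] poly_roots_finite[OF \<open>R \<noteq> 0\<close>] by simp
  qed simp
qed

lemma Fq_finite_card_ge:
  fixes k_type :: "'k::field itself"
  assumes "prime p" "CHAR('k) = p" "q = p ^ f" "0 < f"
    and root_exists: "\<forall>P :: 'k poly. 0 < degree P \<longrightarrow> (\<exists>x. poly P x = 0)"
  shows "finite (Fq q :: 'k set)" "q \<le> card (Fq q :: 'k set)"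
proof -
  define P :: "'k poly" where "P = monom 1 q - [:0, 1:]"
  have "p ^ 1 \<le> p ^ f" using assms(1,4) by (intro power_increasing) (auto simp: prime_gt_0_nat Suc_le_eq)
  then have "p \<le> q" using assms by simp
  then have "2 \<le> q" using prime_ge_2_nat[OF \<open>prime p\<close>] by linarith
  then have deg: "degree P = q"
    unfolding P_def diff_conv_add_uminus by (subst degree_add_eq_left) (auto simp: degree_monom_eq)
  have roots: "Fq q = {x. poly P x = 0}" by (auto simp: Fq_def P_def poly_monom)
  have "of_nat q = (0 :: 'k)" using assms by (simp add: of_nat_eq_0_iff_char_dvd)
  then have "pderiv P = [:-1:]" by (simp add: P_def pderiv_diff pderiv_monom pderiv_pCons)
  then have "rsquarefree P"
    using \<open>2 \<le> q\<close> deg by (intro rsquarefree_if_no_common_root_pderiv) auto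
  then show "finite (Fq q :: 'k set)" "q \<le> card (Fq q :: 'k set)"
    using degree_le_card_roots_if_rsquarefree[OF root_exists] deg
    unfolding roots by (auto simp: rsquarefree_def poly_roots_finite)
qed

lemma poly_eq_0_if_vanishes_on_Fq:
  fixes R :: "'k::field poly"
  assumes "prime p" "CHAR('k) = p" "q = p ^ f" "0 < f"
    and root_exists: "\<forall>P :: 'k poly. 0 < degree P \<longrightarrow> (\<exists>x. poly P x = 0)"
    and "degree R < q" "\<forall>t\<in>Fq q. poly R t = 0"
  shows "R = 0"
proof (rule ccontr)
  assume "R \<noteq> 0"
  have "card (Fq q :: 'k set) \<le> card {x. poly R x = 0}"
    using \<open>R \<noteq> 0\<close> assms(7) by (intro card_mono poly_roots_finite) auto
  also have "\<dots> \<le> degree R" using \<open>R \<noteq> 0\<close> by (rule card_poly_roots_bound)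
  finally show False using Fq_finite_card_ge[OF assms(1-5)] \<open>degree R < q\<close> by linarith
qed

lemma Fq_add:
  "prime CHAR('k) \<Longrightarrow> q = CHAR('k) ^ f \<Longrightarrow> x \<in> Fq q \<Longrightarrow> y \<in> Fq q \<Longrightarrow> x + y \<in> (Fq q :: 'k::field set)"
  by (simp add: Fq_def freshmans_dream')

lemma Fq_mult: "x \<in> Fq q \<Longrightarrow> y \<in> Fq q \<Longrightarrow> x * y \<in> Fq q"
  by (simp add: Fq_def power_mult_distrib)

lemma Fq_0: "0 < q \<Longrightarrow> 0 \<in> Fq q"
  by (simp add: Fq_def)

lemma Fq_1: "1 \<in> Fq q"
  by (simp add: Fq_def)

lemma Fq_power_eq_1:
  assumes "x \<in> Fq q" "x \<noteq> 0" "0 < q" "(q - 1) dvd e"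
  shows "x ^ e = 1"
proof -
  have "x * x ^ (q - 1) = x * 1" using assms(1,3) by (simp add: Fq_def flip: power_Suc)
  then have "x ^ (q - 1) = 1" using \<open>x \<noteq> 0\<close> by simp
  then show ?thesis using \<open>(q - 1) dvd e\<close> by (auto elim!: dvdE simp: power_mult)
qed

lemma Fq_power_eq_power_q_minus_1:
  assumes "x \<in> Fq q" "2 \<le> q" "(q - 1) dvd e" "0 < e"
  shows "x ^ e = x ^ (q - 1)"
proof (cases "x = 0")
  case False
  then show ?thesis using assms Fq_power_eq_1[of x q] by simp
qed (use assms in \<open>simp add: zero_power\<close>)

lemma det_nonzero_maps_nonzero:
  fixes a b c d x y :: "'k::field"
  assumes "a * d - b * c \<noteq> 0" "(x, y) \<noteq> (0, 0)"
  shows "(a * x + c * y, b * x + d * y) \<noteq> (0, 0)"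
proof
  assume h: "(a * x + c * y, b * x + d * y) = (0, 0)"
  have "x * (a * d - b * c) = d * (a * x + c * y) - c * (b * x + d * y)"
    "y * (a * d - b * c) = a * (b * x + d * y) - b * (a * x + c * y)"
    by (simp_all add: algebra_simps)
  with h assms show False by simp
qed

lemma lookup_const_mult: "lookup (const c * P) m = c * lookup P m"
  by (simp add: const_def flip: mult_map_scale_conv_mult) (simp add: map.rep_eq when_def)

lemma keys_const_mult: "keys (const c * P) \<subseteq> keys P"
  by (auto simp: in_keys_iff lookup_const_mult)

lemma const_0 [simp]: "const 0 = 0"
  by (simp add: const_def)

lemma const_1 [simp]: "const 1 = 1"
  by (simp add: const_def)

lemma const_add: "const (a + b) = const a + const b"
  by (simp add: const_def single_add)

lemma const_mult: "const (a * b) = const a * const b"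
  by (simp add: const_def mult_single)

lemma single_eq_const_mult: "single m c = const c * single m 1"
  by (simp add: const_def mult_single)

lemma var_power: "var v ^ n = (single (single v n) 1 :: 'k::comm_ring_1 mpoly)"
  by (induction n) (auto simp: var_def mult_single simp flip: single_add)

lemma prod_single_one: "(\<Prod>i\<in>A. single (g i) (1::'k::comm_semiring_1)) = single (\<Sum>i\<in>A. g i) 1"
  by (induction A rule: infinite_finite_induct) (auto simp: mult_single)

definition eval_monom :: "('v \<Rightarrow> 'k::comm_semiring_1) \<Rightarrow> ('v \<Rightarrow>\<^sub>0 nat) \<Rightarrow> 'k" where
  "eval_monom \<tau> m = (\<Prod>v\<in>keys m. \<tau> v ^ lookup m v)"

definition eval_mpoly :: "('v \<Rightarrow> 'k::comm_semiring_1) \<Rightarrow> (('v \<Rightarrow>\<^sub>0 nat) \<Rightarrow>\<^sub>0 'k) \<Rightarrow> 'k" where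
  "eval_mpoly \<tau> P = (\<Sum>m\<in>keys P. lookup P m * eval_monom \<tau> m)"

lemma eval_monom_superset:
  "finite S \<Longrightarrow> keys m \<subseteq> S \<Longrightarrow> eval_monom \<tau> m = (\<Prod>v\<in>S. \<tau> v ^ lookup m v)"
  unfolding eval_monom_def by (rule prod.mono_neutral_left) (auto simp: in_keys_iff)

lemma eval_monom_add: "eval_monom \<tau> (a + b) = eval_monom \<tau> a * eval_monom \<tau> b"
proof -
  let ?S = "keys a \<union> keys b"
  have "eval_monom \<tau> (a + b) = (\<Prod>v\<in>?S. \<tau> v ^ lookup (a + b) v)"
    by (rule eval_monom_superset) (auto dest: subsetD[OF keys_add])
  also have "\<dots> = (\<Prod>v\<in>?S. \<tau> v ^ lookup a v) * (\<Prod>v\<in>?S. \<tau> v ^ lookup b v)"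
    by (simp add: lookup_add power_add prod.distrib)
  also have "\<dots> = eval_monom \<tau> a * eval_monom \<tau> b"
    by (simp add: eval_monom_superset[of ?S a] eval_monom_superset[of ?S b])
  finally show ?thesis .
qed

lemma eval_monom_0 [simp]: "eval_monom \<tau> 0 = 1"
  by (simp add: eval_monom_def)

lemma eval_monom_single [simp]: "eval_monom \<tau> (single v n) = \<tau> v ^ n"
  by (simp add: eval_monom_def)

lemma eval_monom_sum: "eval_monom \<tau> (\<Sum>i\<in>A. m i) = (\<Prod>i\<in>A. eval_monom \<tau> (m i))"
  by (induction A rule: infinite_finite_induct) (auto simp: eval_monom_add)

lemma eval_mpoly_superset:
  "finite S \<Longrightarrow> keys P \<subseteq> S \<Longrightarrow> eval_mpoly \<tau> P = (\<Sum>m\<in>S. lookup P m * eval_monom \<tau> m)"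
  unfolding eval_mpoly_def by (rule sum.mono_neutral_left) (auto simp: in_keys_iff)

lemma eval_mpoly_add: "eval_mpoly \<tau> (P + Q) = eval_mpoly \<tau> P + eval_mpoly \<tau> Q"
proof -
  let ?S = "keys P \<union> keys Q"
  have "eval_mpoly \<tau> (P + Q) = (\<Sum>m\<in>?S. lookup (P + Q) m * eval_monom \<tau> m)"
    by (rule eval_mpoly_superset) (auto dest: subsetD[OF keys_add])
  also have "\<dots> = eval_mpoly \<tau> P + eval_mpoly \<tau> Q"
    by (simp add: lookup_add distrib_right sum.distrib eval_mpoly_superset[of ?S P]
        eval_mpoly_superset[of ?S Q])
  finally show ?thesis .
qed

lemma eval_mpoly_0 [simp]: "eval_mpoly \<tau> 0 = 0"
  by (simp add: eval_mpoly_def)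

lemma eval_mpoly_single: "eval_mpoly \<tau> (single m c) = c * eval_monom \<tau> m"
  by (simp add: eval_mpoly_def)

lemma eval_mpoly_1 [simp]: "eval_mpoly \<tau> 1 = 1"
  by (simp add: eval_mpoly_def)

lemma eval_mpoly_sum: "eval_mpoly \<tau> (\<Sum>i\<in>A. F i) = (\<Sum>i\<in>A. eval_mpoly \<tau> (F i))"
  by (induction A rule: infinite_finite_induct) (auto simp: eval_mpoly_add)

lemma poly_mapping_sum_single: "P = (\<Sum>m\<in>keys P. single m (lookup P m))"
proof (rule poly_mapping_eqI)
  fix k
  have "lookup (\<Sum>m\<in>keys P. single m (lookup P m)) k = (\<Sum>m\<in>keys P. if m = k then lookup P m else 0)"
    by (simp add: lookup_sum lookup_single when_def)
  also have "\<dots> = lookup P k" by (simp add: sum.delta in_keys_iff)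
  finally show "lookup P k = lookup (\<Sum>m\<in>keys P. single m (lookup P m)) k" by simp
qed

lemma eval_mpoly_mult: "eval_mpoly \<tau> (P * Q) = eval_mpoly \<tau> P * eval_mpoly \<tau> Q"
proof -
  have "P * Q = (\<Sum>m\<in>keys P. single m (lookup P m)) * (\<Sum>m'\<in>keys Q. single m' (lookup Q m'))"
    by (simp flip: poly_mapping_sum_single)
  also have "\<dots> = (\<Sum>m\<in>keys P. \<Sum>m'\<in>keys Q. single (m + m') (lookup P m * lookup Q m'))"
    by (simp add: sum_product mult_single)
  finally have "eval_mpoly \<tau> (P * Q) =
      (\<Sum>m\<in>keys P. \<Sum>m'\<in>keys Q. (lookup P m * eval_monom \<tau> m) * (lookup Q m' * eval_monom \<tau> m'))"
    by (simp add: eval_mpoly_sum eval_mpoly_single eval_monom_add mult_ac)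
  also have "\<dots> = eval_mpoly \<tau> P * eval_mpoly \<tau> Q"
    by (simp add: eval_mpoly_def sum_product)
  finally show ?thesis .
qed

lemma eval_mpoly_uminus: "eval_mpoly \<tau> (- P) = - eval_mpoly (\<tau> :: 'v \<Rightarrow> 'k::comm_ring_1) P"
  by (simp add: eval_mpoly_def sum_negf)

lemma eval_mpoly_diff:
  "eval_mpoly \<tau> (P - Q) = eval_mpoly \<tau> P - eval_mpoly (\<tau> :: 'v \<Rightarrow> 'k::comm_ring_1) Q"
  using eval_mpoly_add[of \<tau> P "- Q"] by (simp add: eval_mpoly_uminus)

lemma eval_mpoly_power: "eval_mpoly \<tau> (P ^ n) = eval_mpoly \<tau> P ^ n"
  by (induction n) (auto simp: eval_mpoly_mult)

lemma eval_mpoly_prod: "eval_mpoly \<tau> (\<Prod>i\<in>A. F i) = (\<Prod>i\<in>A. eval_mpoly \<tau> (F i))"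
  by (induction A rule: infinite_finite_induct) (auto simp: eval_mpoly_mult)

lemma eval_mpoly_const [simp]: "eval_mpoly \<tau> (const c) = c"
  by (simp add: const_def eval_mpoly_single)

lemma eval_mpoly_var [simp]: "eval_mpoly \<tau> (var v) = \<tau> v"
  by (simp add: var_def eval_mpoly_single)

lemma eval_mpoly_subst: "eval_mpoly \<tau> (subst \<sigma> P) = eval_mpoly (\<lambda>v. eval_mpoly \<tau> (\<sigma> v)) P"
  by (simp add: subst_def eval_mpoly_sum eval_mpoly_mult eval_mpoly_prod eval_mpoly_power
      eval_mpoly_def[of "\<lambda>v. eval_mpoly \<tau> (\<sigma> v)"] eval_monom_def)

definition multideg :: "nat \<Rightarrow> (nat \<Rightarrow> nat) \<Rightarrow> ((nat \<times> bool) \<Rightarrow>\<^sub>0 nat) \<Rightarrow> bool" where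
  "multideg f n m \<longleftrightarrow>
     (\<forall>j<f. lookup m (j, False) + lookup m (j, True) = n j) \<and> (\<forall>j b. f \<le> j \<longrightarrow> lookup m (j, b) = 0)"

lemma tens_iff_multideg: "P \<in> tens f n \<longleftrightarrow> (\<forall>m\<in>keys P. multideg f n m)"
  by (simp add: tens_def multideg_def)

lemma multideg_lookup_True_le: "multideg f n m \<Longrightarrow> j < f \<Longrightarrow> lookup m (j, True) \<le> n j"
  unfolding multideg_def by (metis le_add2)

lemma multideg_lookup_False:
  "multideg f n m \<Longrightarrow> j < f \<Longrightarrow> lookup m (j, False) = n j - lookup m (j, True)"
  unfolding multideg_def by (metis add_diff_cancel_right')

lemma multideg_eqI:
  assumes "multideg f n m" "multideg f n m'" "\<forall>j<f. lookup m (j, True) = lookup m' (j, True)"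
  shows "m = m'"
proof (rule poly_mapping_eqI)
  fix v :: "nat \<times> bool"
  obtain j b where v: "v = (j, b)" by (cases v)
  show "lookup m v = lookup m' v"
  proof (cases "j < f")
    case True
    then show ?thesis
      using assms v multideg_lookup_False[OF assms(1) True] multideg_lookup_False[OF assms(2) True]
      by (cases b) auto
  next
    case False
    then show ?thesis using assms(1,2) v by (simp add: multideg_def)
  qed
qed

lemma tens_cong: "(\<And>j. j < f \<Longrightarrow> n j = n' j) \<Longrightarrow> tens f n = tens f n'"
  by (simp add: tens_def)

lemma tens_0 [simp]: "0 \<in> tens f n"
  by (simp add: tens_iff_multideg)

lemma tens_add: "P \<in> tens f n \<Longrightarrow> Q \<in> tens f n \<Longrightarrow> P + Q \<in> tens f n"
  unfolding tens_iff_multideg by (auto dest: subsetD[OF keys_add])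

lemma tens_uminus: "P \<in> tens f n \<Longrightarrow> - P \<in> tens f n"
  unfolding tens_iff_multideg by simp

lemma tens_diff: "P \<in> tens f n \<Longrightarrow> Q \<in> tens f n \<Longrightarrow> P - Q \<in> tens f n"
  using tens_add[of P f n "- Q"] tens_uminus by auto

lemma tens_sum: "(\<And>i. i \<in> A \<Longrightarrow> F i \<in> tens f n) \<Longrightarrow> (\<Sum>i\<in>A. F i) \<in> tens f n"
  by (induction A rule: infinite_finite_induct) (auto intro: tens_add)

lemma tens_const_mult: "P \<in> tens f n \<Longrightarrow> const c * P \<in> tens f n"
  unfolding tens_iff_multideg by (auto dest: subsetD[OF keys_const_mult])

lemma tens_single: "multideg f n m \<Longrightarrow> single m c \<in> tens f n"
  by (simp add: tens_iff_multideg)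

lemma tens_const: "const c \<in> tens f (\<lambda>_. 0)"
  by (simp add: const_def tens_single multideg_def)

lemma tens_mult:
  assumes "P \<in> tens f n1" "Q \<in> tens f n2"
  shows "P * Q \<in> tens f (\<lambda>j. n1 j + n2 j)"
  unfolding tens_iff_multideg
proof
  fix m assume "m \<in> keys (P * Q)"
  then obtain a b where "m = a + b" "a \<in> keys P" "b \<in> keys Q"
    using keys_mult by blast
  moreover have "multideg f n1 a" "multideg f n2 b"
    using assms \<open>a \<in> keys P\<close> \<open>b \<in> keys Q\<close> by (auto simp: tens_iff_multideg)
  ultimately show "multideg f (\<lambda>j. n1 j + n2 j) m"
    unfolding multideg_def by (simp add: lookup_add add_ac)
qed

lemma tens_prod:
  assumes "finite A" "\<And>i. i \<in> A \<Longrightarrow> F i \<in> tens f (n i)"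
  shows "(\<Prod>i\<in>A. F i) \<in> tens f (\<lambda>j. \<Sum>i\<in>A. n i j)"
  using assms
proof (induction A rule: finite_induct)
  case empty
  then show ?case using tens_const[of 1 f] by simp
next
  case (insert a A)
  then have "F a * (\<Prod>i\<in>A. F i) \<in> tens f (\<lambda>j. n a j + (\<Sum>i\<in>A. n i j))"
    by (intro tens_mult) auto
  with insert.hyps show ?case by simp
qed

lemma tens_power: "P \<in> tens f n \<Longrightarrow> P ^ e \<in> tens f (\<lambda>j. e * n j)"
  using tens_prod[of "{..<e}" "\<lambda>_. P" f "\<lambda>_. n"] by simp

lemma tens_zero_eq_const: "Q \<in> tens f (\<lambda>_. 0) \<Longrightarrow> Q = const (lookup Q 0)"
proof (rule poly_mapping_eqI)
  fix m assume Q: "Q \<in> tens f (\<lambda>_. 0)"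
  have "m = 0" if "m \<in> keys Q"
  proof (rule poly_mapping_eqI)
    fix v :: "nat \<times> bool"
    have "multideg f (\<lambda>_. 0) m" using Q that by (simp add: tens_iff_multideg)
    then show "lookup m v = lookup 0 v" unfolding multideg_def
      by (cases v; cases "fst v < f"; cases "snd v") auto
  qed
  then show "lookup Q m = lookup (const (lookup Q 0)) m"
    by (cases "m = 0") (auto simp: const_def lookup_single in_keys_iff)
qed

definition xy_monom :: "nat \<Rightarrow> (nat \<Rightarrow> nat) \<Rightarrow> (nat \<Rightarrow> nat) \<Rightarrow> (nat \<times> bool) \<Rightarrow>\<^sub>0 nat" where
  "xy_monom f A B = (\<Sum>j<f. single (j, False) (A j) + single (j, True) (B j))"

lemma lookup_xy_monom:
  "lookup (xy_monom f A B) (i, b) = (if i < f then (if b then B i else A i) else 0)"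
proof -
  have "lookup (xy_monom f A B) (i, b) = (\<Sum>j<f. (if j = i then (if b then B i else A i) else 0))"
    unfolding xy_monom_def lookup_sum lookup_add
    by (intro sum.cong) (auto simp: lookup_single when_def)
  then show ?thesis by (simp add: sum.delta')
qed

lemma multideg_xy_monom: "(\<And>j. j < f \<Longrightarrow> A j + B j = n j) \<Longrightarrow> multideg f n (xy_monom f A B)"
  by (simp add: multideg_def lookup_xy_monom)

lemma multideg_eq_xy_monom:
  "multideg f n m \<Longrightarrow> m = xy_monom f (\<lambda>j. lookup m (j, False)) (\<lambda>j. lookup m (j, True))"
  by (rule poly_mapping_eqI) (auto simp: multideg_def lookup_xy_monom not_less)

lemma xy_monom_cong:
  "(\<And>j. j < f \<Longrightarrow> A j = A' j) \<Longrightarrow> (\<And>j. j < f \<Longrightarrow> B j = B' j) \<Longrightarrow> xy_monom f A B = xy_monom f A' B'"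
  unfolding xy_monom_def by (intro sum.cong refl) auto

lemma multideg_exchange:
  assumes m: "multideg f n (u + single (j, False) 1 + single (k, True) e)"
    and "j < f" "k < f" "j \<noteq> k"
  shows "multideg f n (u + single (j, True) 1 + single (k, False) e)"
    and "(\<Sum>i<f. lookup (u + single (j, True) 1 + single (k, False) e) (i, True)) + e
       = (\<Sum>i<f. lookup (u + single (j, False) 1 + single (k, True) e) (i, True)) + 1"
proof -
  let ?m = "u + single (j, False) 1 + single (k, True) e"
  let ?m' = "u + single (j, True) 1 + single (k, False) e"
  (* stated without subtraction, so that it is a plain identity in nat *)
  have l: "lookup ?m' (i, b) + (if (i, b) = (j, False) then 1 else 0) + (if (i, b) = (k, True) then e else 0)
      = lookup ?m (i, b) + (if (i, b) = (j, True) then 1 else 0) + (if (i, b) = (k, False) then e else 0)"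
    for i b
    by (simp add: lookup_add lookup_single when_def)
  show "multideg f n ?m'"
    unfolding multideg_def
  proof (intro conjI allI impI)
    fix i assume "i < f"
    then show "lookup ?m' (i, False) + lookup ?m' (i, True) = n i"
      using l[of i False] l[of i True] m by (auto simp: multideg_def)
  next
    fix i b assume "f \<le> i"
    then show "lookup ?m' (i, b) = 0"
      using l[of i b] m \<open>j < f\<close> \<open>k < f\<close> by (auto simp: multideg_def)
  qed
  have "(\<Sum>i<f. lookup ?m' (i, True) + (if i = k then e else 0))
      = (\<Sum>i<f. lookup ?m (i, True) + (if i = j then 1 else 0))"
  proof (rule sum.cong)
    fix i
    show "lookup ?m' (i, True) + (if i = k then e else 0)
        = lookup ?m (i, True) + (if i = j then 1 else 0)"
      using l[of i True] by simp
  qed simp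
  then show "(\<Sum>i<f. lookup ?m' (i, True)) + e = (\<Sum>i<f. lookup ?m (i, True)) + 1"
    using \<open>j < f\<close> \<open>k < f\<close> by (simp add: sum.distrib)
qed

lemma eval_monom_xy_monom:
  "eval_monom \<tau> (xy_monom f A B) = (\<Prod>j<f. \<tau> (j, False) ^ A j * \<tau> (j, True) ^ B j)"
  by (simp add: xy_monom_def eval_monom_sum eval_monom_add)

lemma eval_monom_var: "eval_monom var m = (single m 1 :: 'k::comm_ring_1 mpoly)"
proof -
  have "eval_monom var m = (\<Prod>v\<in>keys m. single (single v (lookup m v)) (1 :: 'k))"
    unfolding eval_monom_def by (simp add: var_power)
  also have "\<dots> = single (\<Sum>v\<in>keys m. single v (lookup m v)) 1"
    by (rule prod_single_one)
  finally show ?thesis by (simp flip: poly_mapping_sum_single)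
qed

lemma prod_Xv_Yv_eq_single:
  "(\<Prod>j<f. Xv j ^ A j * Yv j ^ B j) = (single (xy_monom f A B) 1 :: 'k::comm_ring_1 mpoly)"
  by (simp add: Xv_def Yv_def eval_monom_xy_monom flip: eval_monom_var)

lemma single_eq_prod_Xv_Yv:
  "multideg f n m \<Longrightarrow>
    (single m 1 :: 'k::comm_ring_1 mpoly) = (\<Prod>j<f. Xv j ^ lookup m (j, False) * Yv j ^ lookup m (j, True))"
  by (subst multideg_eq_xy_monom) (auto simp: prod_Xv_Yv_eq_single)

lemma tens_prod_Xv_Yv:
  "(\<And>j. j < f \<Longrightarrow> A j + B j = n j) \<Longrightarrow>
    (\<Prod>j<f. Xv j ^ A j * Yv j ^ B j) \<in> (tens f n :: 'k::comm_ring_1 mpoly set)"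
  unfolding prod_Xv_Yv_eq_single by (intro tens_single multideg_xy_monom)

lemma tens_act:
  assumes "P \<in> tens f n"
  shows "act p f a b c d P \<in> tens f n"
proof -
  define \<sigma> :: "nat \<times> bool \<Rightarrow> 'a mpoly" where "\<sigma> = (\<lambda>(j, isY). if j < f then
       (if \<not> isY then const (a ^ (p ^ j)) * Xv j + const (c ^ (p ^ j)) * Yv j
        else const (b ^ (p ^ j)) * Xv j + const (d ^ (p ^ j)) * Yv j)
     else var (j, isY))"
  have "eval_monom \<sigma> m \<in> tens f n" if "m \<in> keys P" for m
  proof -
    have m: "multideg f n m" using assms that by (simp add: tens_iff_multideg)
    let ?\<delta> = "\<lambda>j i. if i = j then 1 else 0 :: nat"
    have "\<sigma> (j, isY) \<in> tens f (?\<delta> j)" if "j < f" for j isY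
    proof -
      have "var (j, b) \<in> tens f (?\<delta> j)" for b
        unfolding var_def using that
        by (intro tens_single) (auto simp: multideg_def lookup_single when_def)
      then show ?thesis using that by (auto simp: \<sigma>_def Xv_def Yv_def intro!: tens_add tens_const_mult)
    qed
    then have "(\<Prod>j<f. \<sigma> (j, False) ^ lookup m (j, False) * \<sigma> (j, True) ^ lookup m (j, True))
        \<in> tens f (\<lambda>i. \<Sum>j<f. lookup m (j, False) * ?\<delta> j i + lookup m (j, True) * ?\<delta> j i)"
      by (intro tens_prod) (auto intro!: tens_mult tens_power)
    also have "\<dots> = tens f n"
    proof (rule tens_cong)
      fix i assume "i < f"
      show "(\<Sum>j<f. lookup m (j, False) * ?\<delta> j i + lookup m (j, True) * ?\<delta> j i) = n i"
      proof -
        have "(\<Sum>j<f. lookup m (j, False) * ?\<delta> j i + lookup m (j, True) * ?\<delta> j i)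
            = (\<Sum>j<f. if i = j then lookup m (j, False) + lookup m (j, True) else 0)"
          by (intro sum.cong) auto
        then show ?thesis using m \<open>i < f\<close> by (simp add: multideg_def)
      qed
    qed
    finally show ?thesis by (subst multideg_eq_xy_monom[OF m]) (simp add: eval_monom_xy_monom)
  qed
  then show ?thesis unfolding act_def subst_def eval_monom_def[symmetric] \<sigma>_def[symmetric]
    by (auto intro!: tens_sum tens_const_mult)
qed

section \<open>Evaluation at Frobenius-twisted points\<close>

definition radix :: "nat \<Rightarrow> nat \<Rightarrow> (nat \<Rightarrow> nat) \<Rightarrow> nat" where
  "radix p f A = (\<Sum>j<f. A j * p ^ j)"

lemma radix_cong: "(\<And>j. j < f \<Longrightarrow> A j = B j) \<Longrightarrow> radix p f A = radix p f B"
  by (simp add: radix_def)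

lemma radix_add: "radix p f (\<lambda>j. A j + B j) = radix p f A + radix p f B"
  by (simp add: radix_def sum.distrib add_mult_distrib)

lemma radix_0 [simp]: "radix p f (\<lambda>_. 0) = 0"
  by (simp add: radix_def)

lemma radix_eq_0_iff: "0 < p \<Longrightarrow> radix p f A = 0 \<longleftrightarrow> (\<forall>j<f. A j = 0)"
  by (auto simp: radix_def)

lemma radix_pos: "0 < p \<Longrightarrow> j < f \<Longrightarrow> 0 < A j \<Longrightarrow> 0 < radix p f A"
  unfolding radix_def by (rule ordered_comm_monoid_add_class.sum_pos2[of _ j]) auto

lemma radix_mono: "(\<And>j. j < f \<Longrightarrow> A j \<le> B j) \<Longrightarrow> radix p f A \<le> radix p f B"
  unfolding radix_def by (intro sum_mono mult_right_mono) auto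

lemma radix_p_minus_1: "0 < p \<Longrightarrow> radix p f (\<lambda>_. p - 1) = p ^ f - 1"
proof (induction f)
  case (Suc f)
  have "1 \<le> p ^ f" using Suc.prems by simp
  then show ?case using Suc by (simp add: radix_def algebra_simps diff_mult_distrib)
qed (simp add: radix_def)

lemma radix_inj:
  assumes "\<forall>j<f. A j < p" "\<forall>j<f. B j < p" "radix p f A = radix p f B"
  shows "\<forall>j<f. A j = B j"
  using assms
proof (induction f arbitrary: A B)
  case (Suc f)
  have split: "radix p (Suc f) C = C 0 + p * radix p f (\<lambda>j. C (Suc j))" for C
    unfolding radix_def by (subst sum.lessThan_Suc_shift) (simp add: sum_distrib_left mult_ac)
  have "A 0 < p" "B 0 < p" using Suc.prems by auto
  moreover have eq: "A 0 + p * radix p f (\<lambda>j. A (Suc j)) = B 0 + p * radix p f (\<lambda>j. B (Suc j))"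
    using Suc.prems(3) by (simp only: split)
  ultimately have "A 0 = B 0"
    by (metis mod_mult_self2 mod_less)
  with eq \<open>A 0 < p\<close> have "radix p f (\<lambda>j. A (Suc j)) = radix p f (\<lambda>j. B (Suc j))"
    by simp
  with Suc.prems(1,2) have "\<forall>j<f. A (Suc j) = B (Suc j)"
    by (intro Suc.IH) auto
  with \<open>A 0 = B 0\<close> show ?case by (auto simp: less_Suc_eq_0_disj)
qed simp

(* Variables with index j >= f are sent to 0, so that eval_frob_point_act holds for every
   polynomial and not only for those in some tens f n. *)
definition frob_point :: "nat \<Rightarrow> nat \<Rightarrow> 'k::comm_ring_1 \<Rightarrow> 'k \<Rightarrow> nat \<times> bool \<Rightarrow> 'k" where
  "frob_point p f x y = (\<lambda>(j, isY). if j < f then (if isY then y else x) ^ p ^ j else 0)"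

lemma frob_point_simps [simp]:
  "j < f \<Longrightarrow> frob_point p f x y (j, False) = x ^ p ^ j"
  "j < f \<Longrightarrow> frob_point p f x y (j, True) = y ^ p ^ j"
  by (simp_all add: frob_point_def)

lemma eval_frob_point_xy_monom:
  "eval_monom (frob_point p f x y) (xy_monom f A B) = x ^ radix p f A * y ^ radix p f B"
  by (simp add: eval_monom_xy_monom radix_def power_sum prod.distrib flip: power_mult)
    (simp add: mult.commute)

lemma eval_frob_point_prod_Xv_Yv:
  "eval_mpoly (frob_point p f x y) (\<Prod>j<f. Xv j ^ A j * Yv j ^ B j) = x ^ radix p f A * y ^ radix p f B"
  by (simp add: prod_Xv_Yv_eq_single eval_mpoly_single eval_frob_point_xy_monom)

lemma eval_monom_frob_point_1:
  "multideg f n m \<Longrightarrow> eval_monom (frob_point p f 1 t) m = t ^ radix p f (\<lambda>j. lookup m (j, True))"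
  by (subst multideg_eq_xy_monom) (auto simp: eval_frob_point_xy_monom)

lemma eval_monom_frob_point_0_1:
  "multideg f n m \<Longrightarrow> eval_monom (frob_point p f 0 1) m = 0 ^ radix p f (\<lambda>j. lookup m (j, False))"
  by (subst multideg_eq_xy_monom) (auto simp: eval_frob_point_xy_monom)

lemma eval_frob_point_act:
  fixes P :: "'k::field mpoly"
  assumes "prime p" "CHAR('k) = p"
  shows "eval_mpoly (frob_point p f x y) (act p f a b c d P)
       = eval_mpoly (frob_point p f (a * x + c * y) (b * x + d * y)) P"
proof -
  have frob: "(u + w) ^ p ^ j = u ^ p ^ j + w ^ p ^ j" for u w :: 'k and j
    using assms by (simp add: freshmans_dream')
  show ?thesis
    unfolding act_def eval_mpoly_subst
    by (rule arg_cong[where f = "\<lambda>\<tau>. eval_mpoly \<tau> P"])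
      (auto simp: frob_point_def eval_mpoly_add eval_mpoly_mult Xv_def Yv_def frob power_mult_distrib)
qed

lemma eval_frob_point_theta:
  assumes "x \<in> Fq (p ^ f)" "y \<in> Fq (p ^ f)" "j < f"
  shows "eval_mpoly (frob_point p f x y) (theta p f j) = 0"
proof -
  define i where "i = (j + f - 1) mod f"
  have "i < f" "Suc i mod f = j" using assms(3) by (auto simp: i_def mod_Suc_eq)
  then have "(z ^ p ^ i) ^ p = z ^ p ^ j" if "z \<in> Fq (p ^ f)" for z
    using that by (cases "Suc i = f") (auto simp: Fq_def simp flip: power_mult power_Suc2)
  then have "(x ^ p ^ i) ^ p = x ^ p ^ j" "(y ^ p ^ i) ^ p = y ^ p ^ j" using assms by auto
  then show ?thesis using assms \<open>i < f\<close> unfolding theta_def i_def[symmetric]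
    by (simp add: eval_mpoly_diff eval_mpoly_mult eval_mpoly_power
        Xv_def Yv_def mult.commute)
qed

section \<open>The ideal generated by the \<open>\<theta>\<^sub>j\<close> and the maps \<open>\<iota>\<close>\<close>

lemma in_theta_ideal_0: "in_theta_ideal p f 0"
  unfolding in_theta_ideal_def by (rule exI[of _ "\<lambda>_. 0"]) simp

lemma in_theta_ideal_add:
  assumes "in_theta_ideal p f P" "in_theta_ideal p f Q"
  shows "in_theta_ideal p f (P + Q)"
proof -
  obtain c c' where "P = (\<Sum>j<f. c j * theta p f j)" "Q = (\<Sum>j<f. c' j * theta p f j)"
    using assms by (auto simp: in_theta_ideal_def)
  then have "P + Q = (\<Sum>j<f. (c j + c' j) * theta p f j)" by (simp add: sum.distrib distrib_right)
  then show ?thesis unfolding in_theta_ideal_def by (rule exI[of _ "\<lambda>j. c j + c' j"])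
qed

lemma in_theta_ideal_mult:
  assumes "in_theta_ideal p f P"
  shows "in_theta_ideal p f (R * P)"
proof -
  obtain c where "P = (\<Sum>j<f. c j * theta p f j)" using assms by (auto simp: in_theta_ideal_def)
  then have "R * P = (\<Sum>j<f. (R * c j) * theta p f j)" by (simp add: sum_distrib_left mult.assoc)
  then show ?thesis unfolding in_theta_ideal_def by (rule exI[of _ "\<lambda>j. R * c j"])
qed

lemma theta_in_theta_ideal: "j < f \<Longrightarrow> in_theta_ideal p f (theta p f j)"
  unfolding in_theta_ideal_def
proof (rule exI[of _ "\<lambda>i. if i = j then 1 else 0"])
  assume "j < f"
  have "(\<Sum>i<f. (if i = j then 1 else 0) * theta p f i) = (\<Sum>i<f. if i = j then theta p f i else 0)"
    by (intro sum.cong) auto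
  also have "\<dots> = theta p f j" using \<open>j < f\<close> by simp
  finally show "theta p f j = (\<Sum>i<f. (if i = j then 1 else 0) * theta p f i)" by (rule sym)
qed

lemma eval_frob_point_theta_ideal:
  assumes "in_theta_ideal p f P" "x \<in> Fq (p ^ f)" "y \<in> Fq (p ^ f)"
  shows "eval_mpoly (frob_point p f x y) P = 0"
proof -
  obtain c where "P = (\<Sum>j<f. c j * theta p f j)" using assms(1) by (auto simp: in_theta_ideal_def)
  then show ?thesis using assms(2,3) by (simp add: eval_mpoly_sum eval_mpoly_mult eval_frob_point_theta)
qed

lemma single_diff_eq_mult_theta:
  "single (m + single (j, False) 1 + single (k, True) p) 1
     - single (m + single (j, True) 1 + single (k, False) p) 1
     = single m 1 * (Xv j * Yv k ^ p - Yv j * Xv k ^ p :: 'k::comm_ring_1 mpoly)"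
  by (simp add: Xv_def Yv_def var_power) (simp add: var_def mult_single right_diff_distrib add.assoc)

lemma lin_ext_superset:
  "finite S \<Longrightarrow> keys Q \<subseteq> S \<Longrightarrow> lin_ext img Q = (\<Sum>m\<in>S. const (lookup Q m) * img m)"
  unfolding lin_ext_def by (rule sum.mono_neutral_left) (auto simp: in_keys_iff)

lemma lin_ext_0 [simp]: "lin_ext img 0 = 0"
  by (simp add: lin_ext_def)

lemma lin_ext_single: "lin_ext img (single m c) = const c * img m"
  by (cases "c = 0") (simp_all add: lin_ext_def)

lemma lin_ext_add: "lin_ext img (P + Q) = lin_ext img P + lin_ext img Q"
proof -
  let ?S = "keys P \<union> keys Q"
  have "lin_ext img (P + Q) = (\<Sum>m\<in>?S. const (lookup (P + Q) m) * img m)"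
    by (rule lin_ext_superset) (auto dest: subsetD[OF keys_add])
  also have "\<dots> = lin_ext img P + lin_ext img Q"
    by (simp add: lookup_add const_add distrib_right sum.distrib lin_ext_superset[of ?S P]
        lin_ext_superset[of ?S Q])
  finally show ?thesis .
qed

lemma lin_ext_const_mult: "lin_ext img (const c * Q) = const c * lin_ext img Q"
proof -
  have "lin_ext img (const c * Q) = (\<Sum>m\<in>keys Q. const (lookup (const c * Q) m) * img m)"
    by (rule lin_ext_superset) (auto dest: subsetD[OF keys_const_mult])
  then show ?thesis
    by (simp add: lookup_const_mult const_mult lin_ext_def sum_distrib_left mult.assoc)
qed

lemma eval_mpoly_lin_ext:
  "eval_mpoly \<tau> (lin_ext img Q) = (\<Sum>m\<in>keys Q. lookup Q m * eval_mpoly \<tau> (img m))"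
  by (simp add: lin_ext_def eval_mpoly_sum eval_mpoly_mult)

lemma tens_lin_ext: "(\<And>m. m \<in> keys Q \<Longrightarrow> img m \<in> tens f n) \<Longrightarrow> lin_ext img Q \<in> tens f n"
  unfolding lin_ext_def by (intro tens_sum tens_const_mult)

lemma iota0_add: "iota0 p f r (P + Q) = iota0 p f r P + iota0 p f r Q"
  by (simp add: iota0_def lin_ext_add)

lemma iota1_add: "iota1 p f r (P + Q) = iota1 p f r P + iota1 p f r Q"
  by (simp add: iota1_def lin_ext_add)

lemma iota0_const_mult: "iota0 p f r (const c * Q) = const c * iota0 p f r Q"
  by (simp add: iota0_def lin_ext_const_mult)

lemma iota1_const_mult: "iota1 p f r (const c * Q) = const c * iota1 p f r Q"
  by (simp add: iota1_def lin_ext_const_mult)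

lemma iota1_single_xy_monom:
  "iota1 p f r (single (xy_monom f A B) 1 :: 'k::comm_ring_1 mpoly) =
     (if \<forall>j<f. B j = p - 1 then \<Prod>j<f. Yv j ^ r j else \<Prod>j<f. Xv j ^ (r j - B j) * Yv j ^ B j)"
proof -
  have "(\<forall>j<f. lookup (xy_monom f A B) (j, True) = p - 1) \<longleftrightarrow> (\<forall>j<f. B j = p - 1)"
    by (simp add: lookup_xy_monom)
  moreover have "(\<Prod>j<f. Xv j ^ (r j - lookup (xy_monom f A B) (j, True)) *
        Yv j ^ lookup (xy_monom f A B) (j, True)) = (\<Prod>j<f. Xv j ^ (r j - B j) * Yv j ^ B j :: 'k mpoly)"
    by (intro prod.cong refl) (simp add: lookup_xy_monom)
  ultimately show ?thesis unfolding iota1_def lin_ext_single by (simp only: const_1 mult_1)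
qed

locale theta_quotient =
  fixes p f q :: nat and r :: "nat \<Rightarrow> nat" and k_type :: "'k::field itself"
  assumes prime_p: "prime p" and f_ge_2: "2 \<le> f" and q_eq: "q = p ^ f"
    and r_ge_q: "\<And>j. j < f \<Longrightarrow> q \<le> r j"
    and q_minus_1_dvd: "(q - 1) dvd radix p f r"
    and char_k: "CHAR('k) = p"
    and root_exists: "\<forall>P :: 'k poly. 0 < degree P \<longrightarrow> (\<exists>x. poly P x = 0)"
begin

abbreviation ev_at :: "'k \<Rightarrow> 'k \<Rightarrow> 'k mpoly \<Rightarrow> 'k" where
  "ev_at x y P \<equiv> eval_mpoly (frob_point p f x y) P"

abbreviation iota :: "'k mpoly \<Rightarrow> 'k mpoly \<Rightarrow> 'k mpoly" where
  "iota Q0 Q1 \<equiv> iota0 p f r Q0 + iota1 p f r Q1"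

lemma p_ge_2: "2 \<le> p"
  using prime_p prime_ge_2_nat by blast

lemma p_le_q: "p \<le> q"
proof -
  have "p ^ 1 \<le> p ^ f" using f_ge_2 p_ge_2 by (intro power_increasing) auto
  then show ?thesis by (simp add: q_eq)
qed

lemma q_ge_2: "2 \<le> q"
  using p_ge_2 p_le_q by linarith

lemma r_ge_p: "j < f \<Longrightarrow> p \<le> r j"
  using r_ge_q p_le_q by (meson le_trans)

lemma radix_top: "radix p f (\<lambda>_. p - 1) = q - 1"
  using radix_p_minus_1[of p f] p_ge_2 by (simp add: q_eq)

(* The exponent of x in the value of prod_j X_j^(r_j - (p - 1)) Y_j^(p - 1), the middle
   term of iota_0 1. *)
abbreviation radix_r' :: nat where
  "radix_r' \<equiv> radix p f (\<lambda>j. r j - (p - 1))"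

lemma radix_r_eq: "radix p f r = radix_r' + (q - 1)"
proof -
  have "radix p f r = radix p f (\<lambda>j. (r j - (p - 1)) + (p - 1))"
  proof (rule radix_cong)
    fix j assume "j < f"
    with r_ge_p[of j] p_ge_2 show "r j = r j - (p - 1) + (p - 1)" by linarith
  qed
  then show ?thesis by (simp only: radix_add radix_top)
qed

lemma q_minus_1_dvd': "(q - 1) dvd radix_r'"
  using q_minus_1_dvd radix_r_eq by (simp add: dvd_add_left_iff)

lemma radix_r'_pos: "0 < radix_r'"
  using f_ge_2 r_ge_p[of 0] p_ge_2 by (intro radix_pos[of _ 0]) auto

lemma Fq_power_q_minus_1: "x \<in> Fq q \<Longrightarrow> x \<noteq> 0 \<Longrightarrow> x ^ (q - 1) = (1 :: 'k)"
  using q_ge_2 by (intro Fq_power_eq_1) auto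

lemma Fq_power_radix_r: "x \<in> Fq q \<Longrightarrow> x ^ radix p f r = (x :: 'k) ^ (q - 1)"
  using q_ge_2 radix_r'_pos radix_r_eq by (intro Fq_power_eq_power_q_minus_1 q_minus_1_dvd) auto

lemma Fq_power_radix_r': "x \<in> Fq q \<Longrightarrow> x ^ radix_r' = (x :: 'k) ^ (q - 1)"
  using q_ge_2 radix_r'_pos by (intro Fq_power_eq_power_q_minus_1 q_minus_1_dvd') auto

lemma Fq_power_radix_r'_add: "x \<in> Fq q \<Longrightarrow> 0 < e \<Longrightarrow> x ^ (radix_r' + e) = (x :: 'k) ^ e"
  using radix_r'_pos Fq_power_radix_r' Fq_power_q_minus_1
  by (cases "x = 0") (simp_all add: zero_power power_add)

lemma iota0_tens: "Q \<in> tens f (\<lambda>_. 0) \<Longrightarrow> iota0 p f r Q \<in> (tens f r :: 'k mpoly set)"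
  unfolding iota0_def
proof (intro tens_lin_ext tens_add tens_diff)
  show "(\<Prod>j<f. Xv j ^ r j) \<in> (tens f r :: 'k mpoly set)"
    using tens_prod_Xv_Yv[of f r "\<lambda>_. 0" r] by simp
  show "(\<Prod>j<f. Yv j ^ r j) \<in> (tens f r :: 'k mpoly set)"
    using tens_prod_Xv_Yv[of f "\<lambda>_. 0" r r] by simp
  show "(\<Prod>j<f. Xv j ^ (r j - (p - 1)) * Yv j ^ (p - 1)) \<in> (tens f r :: 'k mpoly set)"
  proof (rule tens_prod_Xv_Yv)
    fix j assume "j < f"
    with r_ge_p[of j] show "r j - (p - 1) + (p - 1) = r j" by linarith
  qed
qed

lemma iota1_tens: "Q \<in> tens f (\<lambda>_. p - 1) \<Longrightarrow> iota1 p f r Q \<in> (tens f r :: 'k mpoly set)"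
  unfolding iota1_def
proof (intro tens_lin_ext)
  fix m assume "Q \<in> tens f (\<lambda>_. p - 1)" "m \<in> keys Q"
  then have m: "multideg f (\<lambda>_. p - 1) m" by (simp add: tens_iff_multideg)
  have "(\<Prod>j<f. Yv j ^ r j) \<in> (tens f r :: 'k mpoly set)"
    using tens_prod_Xv_Yv[of f "\<lambda>_. 0" r r] by simp
  moreover have
    "(\<Prod>j<f. Xv j ^ (r j - lookup m (j, True)) * Yv j ^ lookup m (j, True)) \<in> (tens f r :: 'k mpoly set)"
  proof (rule tens_prod_Xv_Yv)
    fix j assume "j < f"
    with multideg_lookup_True_le[OF m this] r_ge_p[of j]
    show "r j - lookup m (j, True) + lookup m (j, True) = r j" by linarith
  qed
  ultimately show "(if \<forall>j<f. lookup m (j, True) = p - 1 then \<Prod>j<f. Yv j ^ r j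
      else \<Prod>j<f. Xv j ^ (r j - lookup m (j, True)) * Yv j ^ lookup m (j, True))
      \<in> (tens f r :: 'k mpoly set)"
    by simp
qed

lemma eval_iota0:
  assumes "Q \<in> tens f (\<lambda>_. 0)" "x \<in> Fq q" "y \<in> Fq q" "(x, y) \<noteq> (0, 0)"
  shows "ev_at x y (iota0 p f r Q) = ev_at x y Q"
proof -
  let ?m = "(\<Prod>j<f. Xv j ^ r j) - (\<Prod>j<f. Xv j ^ (r j - (p - 1)) * Yv j ^ (p - 1))
      + (\<Prod>j<f. Yv j ^ r j) :: 'k mpoly"
  have "(\<Prod>j<f. Xv j ^ r j) = (\<Prod>j<f. Xv j ^ r j * Yv j ^ 0 :: 'k mpoly)"
    "(\<Prod>j<f. Yv j ^ r j) = (\<Prod>j<f. Xv j ^ 0 * Yv j ^ r j :: 'k mpoly)"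
    by simp_all
  then have "ev_at x y ?m = x ^ radix p f r - x ^ radix_r' * y ^ radix p f (\<lambda>_. p - 1) + y ^ radix p f r"
    by (simp only: eval_mpoly_add eval_mpoly_diff eval_frob_point_prod_Xv_Yv radix_0) simp
  also have "\<dots> = x ^ (q - 1) - x ^ (q - 1) * y ^ (q - 1) + y ^ (q - 1)"
    using assms(2,3) by (simp only: radix_top Fq_power_radix_r Fq_power_radix_r')
  also have "\<dots> = 1"
  proof (cases "x = 0")
    case True
    then show ?thesis using assms(4) Fq_power_q_minus_1[OF assms(3)] q_ge_2 by simp
  next
    case False
    then show ?thesis using Fq_power_q_minus_1[OF assms(2)] by simp
  qed
  finally have "ev_at x y ?m = 1" .
  moreover have "iota0 p f r Q = const (lookup Q 0) * ?m"
    by (subst tens_zero_eq_const[OF assms(1)]) (simp add: iota0_def const_def lin_ext_single)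
  moreover have "ev_at x y Q = lookup Q 0"
    by (subst tens_zero_eq_const[OF assms(1)]) simp
  ultimately show ?thesis by (simp add: eval_mpoly_mult)
qed

lemma eval_iota1_single:
  assumes "multideg f (\<lambda>_. p - 1) m" "x \<in> Fq q" "y \<in> Fq q" "(x, y) \<noteq> (0, 0)"
  shows "ev_at x y (iota1 p f r (single m 1)) = eval_monom (frob_point p f x y) m"
proof -
  define i where "i j = lookup m (j, True)" for j
  have i_le: "j < f \<Longrightarrow> i j \<le> p - 1" for j
    using multideg_lookup_True_le[OF assms(1)] by (simp add: i_def)
  have "m = xy_monom f (\<lambda>j. p - 1 - i j) i"
    by (subst multideg_eq_xy_monom[OF assms(1)]) (auto intro!: xy_monom_cong
        simp: i_def multideg_lookup_False[OF assms(1)])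
  then have ev_m: "eval_monom (frob_point p f x y) m = x ^ radix p f (\<lambda>j. p - 1 - i j) * y ^ radix p f i"
    by (simp add: eval_frob_point_xy_monom)
  show ?thesis
  proof (cases "\<forall>j<f. i j = p - 1")
    case True
    then have "radix p f i = radix p f (\<lambda>_. p - 1)" "radix p f (\<lambda>j. p - 1 - i j) = radix p f (\<lambda>_. 0)"
      by (auto intro!: radix_cong simp del: radix_0)
    then have "radix p f i = q - 1" "radix p f (\<lambda>j. p - 1 - i j) = 0"
      by (simp_all only: radix_top radix_0)
    moreover have "ev_at x y (\<Prod>j<f. Xv j ^ 0 * Yv j ^ r j) = y ^ (q - 1)"
      using assms(3) by (simp only: eval_frob_point_prod_Xv_Yv radix_0 Fq_power_radix_r) simp
    moreover have "iota1 p f r (single m 1 :: 'k mpoly) = (\<Prod>j<f. Xv j ^ 0 * Yv j ^ r j)"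
      using True by (simp add: iota1_def lin_ext_single i_def)
    ultimately show ?thesis using ev_m by simp
  next
    case False
    then obtain j0 where j0: "j0 < f" "i j0 < p - 1" using i_le le_neq_implies_less by blast
    define e where "e = radix p f (\<lambda>j. p - 1 - i j)"
    have "0 < e" unfolding e_def using j0 p_ge_2 by (intro radix_pos) auto
    have "radix p f (\<lambda>j. r j - i j) = radix p f (\<lambda>j. (r j - (p - 1)) + (p - 1 - i j))"
    proof (rule radix_cong)
      fix j assume "j < f"
      with i_le[of j] r_ge_p[of j] show "r j - i j = r j - (p - 1) + (p - 1 - i j)" by linarith
    qed
    then have "radix p f (\<lambda>j. r j - i j) = radix_r' + e" by (simp add: radix_add e_def)
    moreover have "x ^ (radix_r' + e) = x ^ e"
      using assms(2) \<open>0 < e\<close> by (rule Fq_power_radix_r'_add)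
    ultimately have "ev_at x y (\<Prod>j<f. Xv j ^ (r j - i j) * Yv j ^ i j) = x ^ e * y ^ radix p f i"
      by (simp add: eval_frob_point_prod_Xv_Yv)
    moreover have "iota1 p f r (single m 1 :: 'k mpoly) = (\<Prod>j<f. Xv j ^ (r j - i j) * Yv j ^ i j)"
      using False by (auto simp: iota1_def lin_ext_single i_def)
    ultimately show ?thesis using ev_m by (simp add: e_def)
  qed
qed

lemma eval_iota1:
  assumes "Q \<in> tens f (\<lambda>_. p - 1)" "x \<in> Fq q" "y \<in> Fq q" "(x, y) \<noteq> (0, 0)"
  shows "ev_at x y (iota1 p f r Q) = ev_at x y Q"
proof -
  have "ev_at x y (iota1 p f r Q) = (\<Sum>m\<in>keys Q. lookup Q m * ev_at x y (iota1 p f r (single m 1)))"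
    by (simp add: iota1_def eval_mpoly_lin_ext lin_ext_single)
  also have "\<dots> = ev_at x y Q"
    unfolding eval_mpoly_def[of _ Q] using assms by (intro sum.cong refl)
      (simp add: eval_iota1_single tens_iff_multideg)
  finally show ?thesis .
qed

lemma eval_theta_ideal_Fq: "in_theta_ideal p f P \<Longrightarrow> x \<in> Fq q \<Longrightarrow> y \<in> Fq q \<Longrightarrow> ev_at x y P = 0"
  using eval_frob_point_theta_ideal by (simp add: q_eq)

section \<open>Injectivity\<close>

lemma radix_Y_le: "multideg f (\<lambda>_. p - 1) m \<Longrightarrow> radix p f (\<lambda>j. lookup m (j, True)) \<le> q - 1"
  unfolding radix_top[symmetric] by (intro radix_mono multideg_lookup_True_le)

lemma radix_Y_inj:
  assumes "multideg f (\<lambda>_. p - 1) m" "multideg f (\<lambda>_. p - 1) m'"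
    and "radix p f (\<lambda>j. lookup m (j, True)) = radix p f (\<lambda>j. lookup m' (j, True))"
  shows "m = m'"
proof (rule multideg_eqI[OF assms(1,2)])
  have "lookup m (j, True) < p" "lookup m' (j, True) < p" if "j < f" for j
    using multideg_lookup_True_le[OF assms(1) that] multideg_lookup_True_le[OF assms(2) that] p_ge_2
    by linarith+
  then show "\<forall>j<f. lookup m (j, True) = lookup m' (j, True)"
    using assms(3) by (intro radix_inj) auto
qed

lemma eval_0_1_tens_p_minus_1:
  assumes Q: "Q \<in> tens f (\<lambda>_. p - 1)"
  shows "ev_at 0 1 Q = lookup Q (xy_monom f (\<lambda>_. 0) (\<lambda>_. p - 1))"
proof -
  define top where "top = xy_monom f (\<lambda>_. 0) (\<lambda>_. p - 1)"
  have top: "multideg f (\<lambda>_. p - 1) top" unfolding top_def by (rule multideg_xy_monom) simp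
  have ev_top: "eval_monom (frob_point p f 0 1) m = (if m = top then 1 else 0)" if "m \<in> keys Q" for m
  proof -
    have m: "multideg f (\<lambda>_. p - 1) m" using Q that by (simp add: tens_iff_multideg)
    have "m = top \<longleftrightarrow> (\<forall>j<f. lookup m (j, False) = 0)"
    proof
      assume "\<forall>j<f. lookup m (j, False) = 0"
      then have "\<forall>j<f. lookup m (j, True) = lookup top (j, True)"
        using m by (simp add: multideg_def top_def lookup_xy_monom)
      then show "m = top" by (rule multideg_eqI[OF m top])
    qed (simp add: top_def lookup_xy_monom)
    then show ?thesis
      using p_ge_2 by (simp add: eval_monom_frob_point_0_1[OF m] radix_eq_0_iff power_0_left)
  qed
  have "ev_at 0 1 Q = (\<Sum>m\<in>keys Q. if m = top then lookup Q m else 0)"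
    unfolding eval_mpoly_def[of _ Q] by (intro sum.cong refl) (simp add: ev_top)
  then show ?thesis by (simp add: in_keys_iff top_def)
qed

lemma const_plus_eq_0_if_vanishes:
  assumes Q: "Q \<in> tens f (\<lambda>_. p - 1)"
    and vanish: "\<And>x y. x \<in> Fq q \<Longrightarrow> y \<in> Fq q \<Longrightarrow> (x, y) \<noteq> (0, 0) \<Longrightarrow> c + ev_at x y Q = 0"
  shows "c = 0 \<and> Q = 0"
proof -
  define e where "e m = radix p f (\<lambda>j. lookup m (j, True))" for m
  have deg: "multideg f (\<lambda>_. p - 1) m" if "m \<in> keys Q" for m
    using Q that by (simp add: tens_iff_multideg)
  define R where "R = [:c:] + (\<Sum>m\<in>keys Q. monom (lookup Q m) (e m))"
  have "R = 0"
  proof (rule poly_eq_0_if_vanishes_on_Fq[OF prime_p char_k q_eq _ root_exists])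
    show "0 < f" using f_ge_2 by simp
    have "degree R \<le> q - 1"
      unfolding R_def e_def using radix_Y_le[OF deg]
      by (intro degree_add_le degree_sum_le) (auto intro: degree_monom_le order_trans)
    then show "degree R < q" using q_ge_2 by linarith
    show "\<forall>t\<in>Fq q. poly R t = 0"
    proof
      fix t :: 'k assume "t \<in> Fq q"
      have "(\<Sum>m\<in>keys Q. lookup Q m * t ^ e m) = ev_at 1 t Q"
        unfolding eval_mpoly_def[of _ Q]
        by (intro sum.cong refl) (simp add: eval_monom_frob_point_1[OF deg] e_def)
      then have "poly R t = c + ev_at 1 t Q"
        by (simp add: R_def poly_sum poly_monom)
      then show "poly R t = 0" using vanish[OF Fq_1 \<open>t \<in> Fq q\<close>] by simp
    qed
  qed
  have lookup_Q: "lookup Q m = (if e m = 0 then - c else 0)" if "m \<in> keys Q" for m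
  proof -
    have "coeff (\<Sum>m'\<in>keys Q. monom (lookup Q m') (e m')) (e m)
        = (\<Sum>m'\<in>keys Q. if m' = m then lookup Q m' else 0)"
      unfolding coeff_sum e_def using radix_Y_inj[OF deg deg] that by (intro sum.cong refl) auto
    moreover have "coeff [:c:] (e m) = (if e m = 0 then c else 0)"
      by (cases "e m") simp_all
    ultimately have "coeff R (e m) = (if e m = 0 then c else 0) + lookup Q m"
      using that by (simp add: R_def)
    then show ?thesis using \<open>R = 0\<close> by (auto simp: eq_neg_iff_add_eq_0 add.commute)
  qed
  define top where "top = xy_monom f (\<lambda>_. 0) (\<lambda>_. p - 1)"
  have "lookup Q top = 0"
  proof (cases "top \<in> keys Q")
    case True
    have "e top = radix p f (\<lambda>_. p - 1)"
      unfolding e_def top_def by (intro radix_cong) (simp add: lookup_xy_monom)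
    then have "e top = q - 1" by (simp only: radix_top)
    then show ?thesis using lookup_Q[OF True] q_ge_2 by simp
  qed (simp add: in_keys_iff)
  then have "c = 0"
    using vanish[OF Fq_0 Fq_1] eval_0_1_tens_p_minus_1[OF Q] q_ge_2 by (simp add: top_def)
  moreover have "Q = 0"
  proof (rule poly_mapping_eqI)
    fix m
    show "lookup Q m = lookup 0 m"
      using lookup_Q[of m] \<open>c = 0\<close> by (cases "m \<in> keys Q") (auto simp: in_keys_iff split: if_splits)
  qed
  ultimately show ?thesis ..
qed

lemma iota_eq_0_if_vanishes:
  assumes "Q0 \<in> tens f (\<lambda>_. 0)" "Q1 \<in> tens f (\<lambda>_. p - 1)"
    and vanish: "\<And>x y. x \<in> Fq q \<Longrightarrow> y \<in> Fq q \<Longrightarrow> (x, y) \<noteq> (0, 0) \<Longrightarrow>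
      ev_at x y (iota Q0 Q1) = 0"
  shows "Q0 = 0 \<and> Q1 = 0"
proof -
  have "ev_at x y Q0 = lookup Q0 0" for x y
    by (subst tens_zero_eq_const[OF assms(1)]) simp
  then have "lookup Q0 0 + ev_at x y Q1 = 0" if "x \<in> Fq q" "y \<in> Fq q" "(x, y) \<noteq> (0, 0)" for x y
    using vanish[OF that] eval_iota0[OF assms(1) that] eval_iota1[OF assms(2) that]
    by (simp add: eval_mpoly_add)
  then have "lookup Q0 0 = 0 \<and> Q1 = 0" by (rule const_plus_eq_0_if_vanishes[OF assms(2)])
  then show ?thesis using tens_zero_eq_const[OF assms(1)] by simp
qed

lemma iota_injective:
  fixes Q0 Q1 :: "'k mpoly"
  assumes "Q0 \<in> tens f (\<lambda>_. 0)" "Q1 \<in> tens f (\<lambda>_. p - 1)"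
    and "in_theta_ideal p f (iota Q0 Q1)"
  shows "Q0 = 0 \<and> Q1 = 0"
  using assms by (intro iota_eq_0_if_vanishes) (auto intro: eval_theta_ideal_Fq)

section \<open>Surjectivity\<close>

definition in_iota_image :: "'k mpoly \<Rightarrow> bool" where
  "in_iota_image P \<longleftrightarrow> (\<exists>Q0\<in>tens f (\<lambda>_. 0). \<exists>Q1\<in>tens f (\<lambda>_. p - 1).
      in_theta_ideal p f (P - iota Q0 Q1))"

lemma in_iota_image_iota:
  assumes "Q0 \<in> tens f (\<lambda>_. 0)" "Q1 \<in> tens f (\<lambda>_. p - 1)"
  shows "in_iota_image (iota Q0 Q1)"
  unfolding in_iota_image_def using assms
  by (intro bexI[of _ Q0] bexI[of _ Q1]) (simp_all add: in_theta_ideal_0)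

lemma in_iota_image_iota1: "Q1 \<in> tens f (\<lambda>_. p - 1) \<Longrightarrow> in_iota_image (iota1 p f r Q1)"
  using in_iota_image_iota[of 0 Q1] by (simp add: iota0_def)

lemma in_iota_image_add:
  assumes "in_iota_image P" "in_iota_image P'"
  shows "in_iota_image (P + P')"
proof -
  obtain Q0 Q1 Q0' Q1' where Q: "Q0 \<in> tens f (\<lambda>_. 0)" "Q1 \<in> tens f (\<lambda>_. p - 1)"
      "Q0' \<in> tens f (\<lambda>_. 0)" "Q1' \<in> tens f (\<lambda>_. p - 1)"
    and "in_theta_ideal p f (P - iota Q0 Q1)" "in_theta_ideal p f (P' - iota Q0' Q1')"
    using assms unfolding in_iota_image_def by blast
  then have "in_theta_ideal p f ((P - iota Q0 Q1) + (P' - iota Q0' Q1'))"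
    by (intro in_theta_ideal_add)
  then have "in_theta_ideal p f (P + P' - iota (Q0 + Q0') (Q1 + Q1'))"
    by (simp add: iota0_add iota1_add algebra_simps)
  with Q show ?thesis unfolding in_iota_image_def by (blast intro: tens_add)
qed

lemma in_iota_image_const_mult:
  assumes "in_iota_image P"
  shows "in_iota_image (const c * P)"
proof -
  obtain Q0 Q1 where Q: "Q0 \<in> tens f (\<lambda>_. 0)" "Q1 \<in> tens f (\<lambda>_. p - 1)"
    and "in_theta_ideal p f (P - iota Q0 Q1)"
    using assms unfolding in_iota_image_def by blast
  then have "in_theta_ideal p f (const c * (P - iota Q0 Q1))"
    by (intro in_theta_ideal_mult)
  then have "in_theta_ideal p f (const c * P - iota (const c * Q0) (const c * Q1))"
    by (simp add: iota0_const_mult iota1_const_mult right_diff_distrib distrib_left)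
  with Q show ?thesis unfolding in_iota_image_def by (blast intro: tens_const_mult)
qed

lemma in_iota_image_sum: "(\<And>i. i \<in> A \<Longrightarrow> in_iota_image (F i)) \<Longrightarrow> in_iota_image (\<Sum>i\<in>A. F i)"
proof (induction A rule: infinite_finite_induct)
  case (insert i A)
  then show ?case by (simp add: in_iota_image_add)
qed (use in_iota_image_iota[OF tens_0 tens_0] in \<open>simp_all add: iota0_def iota1_def\<close>)

lemma in_iota_image_theta_cong:
  assumes "in_theta_ideal p f (P - P')" "in_iota_image P'"
  shows "in_iota_image P"
proof -
  obtain Q0 Q1 where Q: "Q0 \<in> tens f (\<lambda>_. 0)" "Q1 \<in> tens f (\<lambda>_. p - 1)"
    and "in_theta_ideal p f (P' - iota Q0 Q1)"
    using assms(2) unfolding in_iota_image_def by blast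
  then have "in_theta_ideal p f ((P - P') + (P' - iota Q0 Q1))"
    by (intro in_theta_ideal_add[OF assms(1)])
  moreover have "(P - P') + (P' - iota Q0 Q1) = P - iota Q0 Q1" by simp
  ultimately have "in_theta_ideal p f (P - iota Q0 Q1)" by simp
  with Q show ?thesis unfolding in_iota_image_def by blast
qed

lemma in_iota_image_reduced_monom:
  assumes m: "multideg f r m" and le: "\<And>j. j < f \<Longrightarrow> lookup m (j, True) \<le> p - 1"
  shows "in_iota_image (single m 1)"
proof -
  define i where "i j = lookup m (j, True)" for j
  have single_m: "single m 1 = (\<Prod>j<f. Xv j ^ (r j - i j) * Yv j ^ i j :: 'k mpoly)"
    unfolding single_eq_prod_Xv_Yv[OF m] i_def
    by (intro prod.cong refl) (simp add: multideg_lookup_False[OF m])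
  define \<mu> where "\<mu> = xy_monom f (\<lambda>j. p - 1 - i j) i"
  have \<mu>: "single \<mu> 1 \<in> (tens f (\<lambda>_. p - 1) :: 'k mpoly set)"
    unfolding \<mu>_def
  proof (intro tens_single multideg_xy_monom)
    fix j assume "j < f"
    with le[of j] show "p - 1 - i j + i j = p - 1" by (simp add: i_def)
  qed
  show ?thesis
  proof (cases "\<forall>j<f. i j = p - 1")
    case False
    then have "single m 1 = iota1 p f r (single \<mu> 1 :: 'k mpoly)"
      by (simp only: single_m \<mu>_def iota1_single_xy_monom if_False)
    then show ?thesis using in_iota_image_iota1[OF \<mu>] by simp
  next
    case True
    define bot where "bot = xy_monom f (\<lambda>_. p - 1) (\<lambda>_. 0)"
    have bot: "single bot 1 \<in> (tens f (\<lambda>_. p - 1) :: 'k mpoly set)"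
      unfolding bot_def by (intro tens_single multideg_xy_monom) simp
    have "0 < f" "(0::nat) \<noteq> p - 1" using f_ge_2 p_ge_2 by auto
    then have "\<not> (\<forall>j<f. (0::nat) = p - 1)" by blast
    then have "iota1 p f r (single bot 1 :: 'k mpoly) = (\<Prod>j<f. Xv j ^ r j)"
      by (simp only: bot_def iota1_single_xy_monom if_False diff_zero power_0 mult_1_right)
    moreover have "iota1 p f r (single \<mu> 1 :: 'k mpoly) = (\<Prod>j<f. Yv j ^ r j)"
      using True by (simp add: \<mu>_def iota1_single_xy_monom)
    moreover have "iota0 p f r (const (- 1) :: 'k mpoly) =
        - ((\<Prod>j<f. Xv j ^ r j) - (\<Prod>j<f. Xv j ^ (r j - (p - 1)) * Yv j ^ (p - 1)) + (\<Prod>j<f. Yv j ^ r j))"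
      unfolding iota0_def const_def lin_ext_single by (simp add: const_def single_uminus)
    moreover have "single m 1 = (\<Prod>j<f. Xv j ^ (r j - (p - 1)) * Yv j ^ (p - 1) :: 'k mpoly)"
      unfolding single_m using True by (intro prod.cong) auto
    ultimately have "single m 1 = iota (const (- 1)) (single bot 1 + single \<mu> 1)"
      by (simp add: iota1_add)
    then show ?thesis using in_iota_image_iota[OF tens_const tens_add[OF bot \<mu>]] by simp
  qed
qed

lemma in_iota_image_top_monom:
  assumes m: "multideg f r m" and top: "\<And>j. j < f \<Longrightarrow> lookup m (j, True) = r j"
  shows "in_iota_image (single m 1)"
proof -
  have "single m 1 = (\<Prod>j<f. Yv j ^ r j :: 'k mpoly)"
    unfolding single_eq_prod_Xv_Yv[OF m]
    by (intro prod.cong refl) (simp add: top multideg_lookup_False[OF m])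
  also have "\<dots> = iota1 p f r (single (xy_monom f (\<lambda>_. 0) (\<lambda>_. p - 1)) 1)"
    by (simp add: iota1_single_xy_monom)
  finally show ?thesis
    by (simp add: in_iota_image_iota1 tens_single multideg_xy_monom)
qed

lemma theta_move:
  assumes m: "multideg f r m" and "j < f" and k: "k = (j + f - 1) mod f"
    and "p \<le> lookup m (k, True)" and "lookup m (j, True) < r j"
  obtains m' where "multideg f r m'" "(\<Sum>i<f. lookup m' (i, True)) < (\<Sum>i<f. lookup m (i, True))"
    "in_theta_ideal p f (single m 1 - single m' 1 :: 'k mpoly)"
proof -
  have "k < f" "k \<noteq> j"
    using \<open>j < f\<close> f_ge_2 unfolding k by (cases j; simp add: mod_if)+
  have "1 \<le> lookup m (j, False)"
    using multideg_lookup_False[OF m \<open>j < f\<close>] \<open>lookup m (j, True) < r j\<close> by simp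
  define u where "u = m - single (j, False) 1 - single (k, True) p"
  have m_eq: "m = u + single (j, False) 1 + single (k, True) p"
    using \<open>1 \<le> lookup m (j, False)\<close> \<open>p \<le> lookup m (k, True)\<close>
    by (intro poly_mapping_eqI) (auto simp: u_def lookup_add lookup_minus lookup_single when_def)
  define m' where "m' = u + single (j, True) 1 + single (k, False) p"
  have m': "multideg f r m'" and "(\<Sum>i<f. lookup m' (i, True)) + p = (\<Sum>i<f. lookup m (i, True)) + 1"
    using multideg_exchange[of f r u j k p, folded m_eq m'_def] m \<open>j < f\<close> \<open>k < f\<close> \<open>k \<noteq> j\<close>
    by simp_all
  then have "(\<Sum>i<f. lookup m' (i, True)) < (\<Sum>i<f. lookup m (i, True))"
    using p_ge_2 by linarith
  moreover have "single m 1 - single m' 1 = single u 1 * (theta p f j :: 'k mpoly)"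
    unfolding theta_def k[symmetric] m'_def by (subst m_eq) (rule single_diff_eq_mult_theta)
  then have "in_theta_ideal p f (single m 1 - single m' 1 :: 'k mpoly)"
    by (simp add: in_theta_ideal_mult theta_in_theta_ideal \<open>j < f\<close>)
  ultimately show ?thesis using m' by (intro that)
qed

lemma large_Y_exponent_propagates:
  assumes stuck: "\<And>j. j < f \<Longrightarrow> p \<le> lookup m ((j + f - 1) mod f, True) \<Longrightarrow> r j \<le> lookup m (j, True)"
    and "j0 < f" "p \<le> lookup m (j0, True)" "j < f"
  shows "p \<le> lookup m (j, True)"
proof -
  have "p \<le> lookup m ((j0 + i) mod f, True)" for i
  proof (induction i)
    case (Suc i)
    let ?j = "Suc (j0 + i) mod f"
    have "(?j + f - 1) mod f = (?j + (f - 1)) mod f" using f_ge_2 by simp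
    also have "\<dots> = (Suc (j0 + i) + (f - 1)) mod f" by (simp add: mod_add_left_eq)
    also have "Suc (j0 + i) + (f - 1) = (j0 + i) + f" using f_ge_2 by simp
    finally have "(?j + f - 1) mod f = (j0 + i) mod f" by simp
    then have "r ?j \<le> lookup m (?j, True)" using stuck[of ?j] f_ge_2 Suc.IH by simp
    moreover have "p \<le> r ?j" using r_ge_p f_ge_2 by simp
    ultimately show ?case by simp
  qed (use assms in simp)
  from this[of "f - j0 + j"] show ?thesis using assms(2,4) by simp
qed

lemma in_iota_image_monom: "multideg f r m \<Longrightarrow> in_iota_image (single m 1)"
proof (induction "\<Sum>i<f. lookup m (i, True)" arbitrary: m rule: less_induct)
  case less
  consider (move) j where "j < f" "p \<le> lookup m ((j + f - 1) mod f, True)" "lookup m (j, True) < r j"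
    | (reduced) "\<And>j. j < f \<Longrightarrow> lookup m (j, True) \<le> p - 1"
    | (top) "\<And>j. j < f \<Longrightarrow> lookup m (j, True) = r j"
  proof (cases "\<exists>j<f. p \<le> lookup m ((j + f - 1) mod f, True) \<and> lookup m (j, True) < r j")
    case False
    then have stuck: "\<And>j. j < f \<Longrightarrow> p \<le> lookup m ((j + f - 1) mod f, True) \<Longrightarrow> r j \<le> lookup m (j, True)"
      by (auto simp: not_less)
    show thesis
    proof (cases "\<exists>j0<f. p \<le> lookup m (j0, True)")
      case True
      then obtain j0 where "j0 < f" "p \<le> lookup m (j0, True)" by blast
      have "r j \<le> lookup m (j, True)" if "j < f" for j
        using that large_Y_exponent_propagates[OF stuck \<open>j0 < f\<close> \<open>p \<le> lookup m (j0, True)\<close>]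
        by (intro stuck) (simp_all add: f_ge_2)
      then show thesis using multideg_lookup_True_le[OF less.prems] by (intro top) (simp add: le_antisym)
    qed (use reduced in force)
  qed (use move in blast)
  then show ?case
  proof cases
    case move
    with less.prems obtain m' where "multideg f r m'"
      "(\<Sum>i<f. lookup m' (i, True)) < (\<Sum>i<f. lookup m (i, True))"
      "in_theta_ideal p f (single m 1 - single m' 1 :: 'k mpoly)"
      by (rule theta_move[OF _ _ refl])
    then show ?thesis using less.hyps by (blast intro: in_iota_image_theta_cong)
  next
    case reduced
    then show ?thesis by (rule in_iota_image_reduced_monom[OF less.prems])
  next
    case top
    then show ?thesis by (rule in_iota_image_top_monom[OF less.prems])
  qed
qed

lemma in_iota_image_tens:
  assumes "P \<in> tens f r"
  shows "in_iota_image P"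
proof -
  have "P = (\<Sum>m\<in>keys P. single m (lookup P m))" by (rule poly_mapping_sum_single)
  also have "\<dots> = (\<Sum>m\<in>keys P. const (lookup P m) * single m 1)"
    by (intro sum.cong refl) (rule single_eq_const_mult)
  finally have P: "P = (\<Sum>m\<in>keys P. const (lookup P m) * single m 1)" .
  show ?thesis using assms
    by (subst P) (intro in_iota_image_sum in_iota_image_const_mult in_iota_image_monom,
        simp add: tens_iff_multideg)
qed

section \<open>Equivariance\<close>

lemma in_theta_ideal_if_vanishes:
  assumes "P \<in> tens f r"
    and vanish: "\<And>x y. x \<in> Fq q \<Longrightarrow> y \<in> Fq q \<Longrightarrow> (x, y) \<noteq> (0, 0) \<Longrightarrow> ev_at x y P = 0"
  shows "in_theta_ideal p f P"
proof -
  obtain Q0 Q1 where Q: "Q0 \<in> tens f (\<lambda>_. 0)" "Q1 \<in> tens f (\<lambda>_. p - 1)"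
    and ideal: "in_theta_ideal p f (P - iota Q0 Q1)"
    using in_iota_image_tens[OF assms(1)] unfolding in_iota_image_def by blast
  have "ev_at x y (iota Q0 Q1) = 0"
    if "x \<in> Fq q" "y \<in> Fq q" "(x, y) \<noteq> (0, 0)" for x y
    using vanish[OF that] eval_theta_ideal_Fq[OF ideal that(1,2)] by (simp add: eval_mpoly_diff)
  then have "Q0 = 0 \<and> Q1 = 0" by (rule iota_eq_0_if_vanishes[OF Q])
  then show ?thesis using ideal by (simp add: iota0_def iota1_def)
qed

lemma equivariant_mod_theta:
  assumes g: "(a, b, c, d) \<in> GL2 q" and Q: "Q \<in> tens f n"
    and maps: "\<And>Q. Q \<in> tens f n \<Longrightarrow> \<iota> Q \<in> tens f r"
    and preserves: "\<And>Q x y. Q \<in> tens f n \<Longrightarrow> x \<in> Fq q \<Longrightarrow> y \<in> Fq q \<Longrightarrow> (x, y) \<noteq> (0, 0) \<Longrightarrow>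
      ev_at x y (\<iota> Q) = ev_at x y Q"
  shows "in_theta_ideal p f (act p f a b c d (\<iota> Q) - \<iota> (act p f a b c d Q))"
proof (rule in_theta_ideal_if_vanishes)
  show "act p f a b c d (\<iota> Q) - \<iota> (act p f a b c d Q) \<in> tens f r"
    using Q by (intro tens_diff tens_act maps)
  fix x y :: 'k assume xy: "x \<in> Fq q" "y \<in> Fq q" "(x, y) \<noteq> (0, 0)"
  have "a \<in> Fq q" "b \<in> Fq q" "c \<in> Fq q" "d \<in> Fq q" and det: "a * d - b * c \<noteq> 0"
    using g by (auto simp: GL2_def)
  moreover have "prime CHAR('k)" "q = CHAR('k) ^ f" using prime_p char_k q_eq by simp_all
  ultimately have gxy: "a * x + c * y \<in> Fq q" "b * x + d * y \<in> Fq q"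
    "(a * x + c * y, b * x + d * y) \<noteq> (0, 0)"
    using xy det_nonzero_maps_nonzero[OF det xy(3)] by (simp_all add: Fq_add Fq_mult)
  have "ev_at x y (act p f a b c d (\<iota> Q)) = ev_at x y (act p f a b c d Q)"
    using preserves[OF Q gxy] by (simp add: eval_frob_point_act[OF prime_p char_k])
  moreover have "ev_at x y (\<iota> (act p f a b c d Q)) = ev_at x y (act p f a b c d Q)"
    using Q xy by (intro preserves tens_act)
  ultimately show "ev_at x y (act p f a b c d (\<iota> Q) - \<iota> (act p f a b c d Q)) = 0"
    by (simp add: eval_mpoly_diff)
qed

end

theorem proposition1:
  fixes p f q :: nat and r :: "nat \<Rightarrow> nat"
    and k_type :: "'k::field itself"
  assumes "prime p" and "2 \<le> f" and "q = p ^ f"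
    and "\<forall>j<f. q \<le> r j"
    and "(q - 1) dvd (\<Sum>j<f. r j * p ^ j)"
    and "CHAR('k) = p"
    and "\<forall>P :: 'k poly. 0 < degree P \<longrightarrow> (\<exists>x. poly P x = 0)"
    and "\<forall>x :: 'k. \<exists>n>0. x ^ (p ^ n) = x"
  shows
    "(\<forall>Q\<in>(tens f (\<lambda>_. 0) :: 'k mpoly set). iota0 p f r Q \<in> tens f r)
   \<and> (\<forall>Q\<in>(tens f (\<lambda>_. p - 1) :: 'k mpoly set). iota1 p f r Q \<in> tens f r)
   \<and> (\<forall>(a, b, c, d) \<in> (GL2 q :: ('k \<times> 'k \<times> 'k \<times> 'k) set).
        (\<forall>Q\<in>tens f (\<lambda>_. 0).
           in_theta_ideal p f (act p f a b c d (iota0 p f r Q) - iota0 p f r (act p f a b c d Q)))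
      \<and> (\<forall>Q\<in>tens f (\<lambda>_. p - 1).
           in_theta_ideal p f (act p f a b c d (iota1 p f r Q) - iota1 p f r (act p f a b c d Q))))
   \<and> (\<forall>Q0\<in>(tens f (\<lambda>_. 0) :: 'k mpoly set). \<forall>Q1\<in>tens f (\<lambda>_. p - 1).
        in_theta_ideal p f (iota0 p f r Q0 + iota1 p f r Q1) \<longrightarrow> Q0 = 0 \<and> Q1 = 0)
   \<and> (\<forall>P\<in>(tens f r :: 'k mpoly set). \<exists>Q0\<in>tens f (\<lambda>_. 0). \<exists>Q1\<in>tens f (\<lambda>_. p - 1).
        in_theta_ideal p f (P - (iota0 p f r Q0 + iota1 p f r Q1)))"
proof -
  interpret theta_quotient p f q r k_type
    using assms by unfold_locales (simp_all add: radix_def)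
  have "(a, b, c, d) \<in> GL2 q \<Longrightarrow> Q \<in> tens f (\<lambda>_. 0) \<Longrightarrow>
      in_theta_ideal p f (act p f a b c d (iota0 p f r Q) - iota0 p f r (act p f a b c d Q))"
    for a b c d and Q :: "'k mpoly"
    by (rule equivariant_mod_theta[OF _ _ iota0_tens eval_iota0])
  moreover have "(a, b, c, d) \<in> GL2 q \<Longrightarrow> Q \<in> tens f (\<lambda>_. p - 1) \<Longrightarrow>
      in_theta_ideal p f (act p f a b c d (iota1 p f r Q) - iota1 p f r (act p f a b c d Q))"
    for a b c d and Q :: "'k mpoly"
    by (rule equivariant_mod_theta[OF _ _ iota1_tens eval_iota1])
  ultimately show ?thesis
    using iota0_tens iota1_tens iota_injective in_iota_image_tens unfolding in_iota_image_def
    by fast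
qed

end
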